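(* Let $S$ be a monoid with zero and let $A_S$ be a semi-simple right $S$-act. The following are equivalent: (i) $A_S$ is Rees artinian; (ii) $A_S$ is finitely Rees cogenerated; (iii) $A_S$ is finitely generated; (iv) $A_S$ is Rees noetherian.
   Context: An $S$-act is $\theta$-simple if its only subacts are itself and a one-element subact. Over a monoid with zero, an $S$-act is semi-simple if it is a coproduct in the category $S$-Act$_0$ (acts with a distinguished zero; coproduct = union of the acts glued along their common zero) of $\theta$-simple acts; equivalently, each of its subacts is a $0$-direct summand. For a subact $B$, $\rho_B=(B\times B)\cup\Delta_A$. $A_S$ is finitely Rees cogenerated if whenever $\bigcap_{i\in I}\rho_{B_i}=\Delta_A$ for subacts $B_i$, already $\bigcap_{j\in J}\rho_{B_j}=\Delta_A$ for some finite $J\subseteq I$. Rees artinian (noetherian) means the descending (ascending) chain condition on subacts. *)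

theory Defs
  imports Main
begin

definition right_act :: "'a set \<Rightarrow> ('a \<Rightarrow> 's::monoid_mult \<Rightarrow> 'a) \<Rightarrow> bool" where
  "right_act A act \<longleftrightarrow>
     (\<forall>a\<in>A. \<forall>s. act a s \<in> A) \<and>
     (\<forall>a\<in>A. act a 1 = a) \<and>
     (\<forall>a\<in>A. \<forall>s t. act (act a s) t = act a (s * t))"

definition act0 :: "'a set \<Rightarrow> ('a \<Rightarrow> 's::monoid_mult \<Rightarrow> 'a) \<Rightarrow> 'a \<Rightarrow> bool" where
  "act0 A act \<theta> \<longleftrightarrow> right_act A act \<and> \<theta> \<in> A \<and> (\<forall>s. act \<theta> s = \<theta>)"

definition subact :: "'a set \<Rightarrow> 'a set \<Rightarrow> ('a \<Rightarrow> 's::monoid_mult \<Rightarrow> 'a) \<Rightarrow> bool" where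
  "subact B A act \<longleftrightarrow> B \<noteq> {} \<and> B \<subseteq> A \<and> (\<forall>b\<in>B. \<forall>s. act b s \<in> B)"

definition theta_simple :: "'a set \<Rightarrow> ('a \<Rightarrow> 's::monoid_mult \<Rightarrow> 'a) \<Rightarrow> 'a \<Rightarrow> bool" where
  "theta_simple B act \<theta> \<longleftrightarrow> (\<forall>C. subact C B act \<longrightarrow> C = B \<or> C = {\<theta>})"

text \<open>Semi-simple: A is the coproduct in S-Act_0 of theta-simple acts, i.e. A is the
union of theta-simple subacts (each containing theta) pairwise intersecting exactly in {theta}.\<close>
definition semisimple :: "'a set \<Rightarrow> ('a \<Rightarrow> 's::{monoid_mult,mult_zero} \<Rightarrow> 'a) \<Rightarrow> 'a \<Rightarrow> bool" where
  "semisimple A act \<theta> \<longleftrightarrow> act0 A act \<theta> \<and>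
     (\<exists>\<B>. (\<forall>B\<in>\<B>. subact B A act \<and> \<theta> \<in> B \<and> theta_simple B act \<theta>) \<and>
          \<Union>\<B> = A \<and>
          (\<forall>B\<in>\<B>. \<forall>C\<in>\<B>. B \<noteq> C \<longrightarrow> B \<inter> C = {\<theta>}))"

definition rees_cong :: "'a set \<Rightarrow> 'a set \<Rightarrow> ('a \<times> 'a) set" where
  "rees_cong A B = (B \<times> B) \<union> Id_on A"

definition fin_rees_cogen :: "'a set \<Rightarrow> ('a \<Rightarrow> 's::monoid_mult \<Rightarrow> 'a) \<Rightarrow> bool" where
  "fin_rees_cogen A act \<longleftrightarrow>
     (\<forall>\<B>. (\<forall>B\<in>\<B>. subact B A act) \<longrightarrow>
        (A \<times> A) \<inter> (\<Inter>B\<in>\<B>. rees_cong A B) = Id_on A \<longrightarrow>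
        (\<exists>\<J>. finite \<J> \<and> \<J> \<subseteq> \<B> \<and> (A \<times> A) \<inter> (\<Inter>B\<in>\<J>. rees_cong A B) = Id_on A))"

definition fin_generated :: "'a set \<Rightarrow> ('a \<Rightarrow> 's::monoid_mult \<Rightarrow> 'a) \<Rightarrow> bool" where
  "fin_generated A act \<longleftrightarrow> (\<exists>X. finite X \<and> X \<subseteq> A \<and> A = {act x s | x s. x \<in> X})"

definition rees_artinian :: "'a set \<Rightarrow> ('a \<Rightarrow> 's::monoid_mult \<Rightarrow> 'a) \<Rightarrow> bool" where
  "rees_artinian A act \<longleftrightarrow>
     (\<forall>C :: nat \<Rightarrow> 'a set. (\<forall>n. subact (C n) A act \<and> C (Suc n) \<subseteq> C n) \<longrightarrow>
        (\<exists>m. \<forall>n\<ge>m. C n = C m))"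

definition rees_noetherian :: "'a set \<Rightarrow> ('a \<Rightarrow> 's::monoid_mult \<Rightarrow> 'a) \<Rightarrow> bool" where
  "rees_noetherian A act \<longleftrightarrow>
     (\<forall>C :: nat \<Rightarrow> 'a set. (\<forall>n. subact (C n) A act \<and> C n \<subseteq> C (Suc n)) \<longrightarrow>
        (\<exists>m. \<forall>n\<ge>m. C n = C m))"

end

theory Submission
  imports Defs
begin

text \<open>Fix a decomposition of A into \<theta>-simple summands and let P be the set of summands other
than {\<theta>}. Each element other than \<theta> lies in exactly one summand and generates it, so a subact
contains the whole summand of each of its nonzero elements. Hence C \<mapsto> {B \<in> P. B \<subseteq> C} is an
order isomorphism from the subacts onto the subsets of P, with inverse U \<mapsto> {\<theta>} \<union> \<Union>U, and each
of the four conditions becomes finiteness of P. For the chain conditions this is the corresponding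
fact about subsets of P; a finite generating set meets only finitely many summands; and if P is
infinite, the Rees congruences of the sums over P minus one summand meet in the diagonal, while
finitely many of them still identify \<theta> with a nonzero element of a summand that none of them
omits.\<close>

definition subset_dcc :: "'a set \<Rightarrow> bool" where
  "subset_dcc X \<longleftrightarrow>
     (\<forall>F :: nat \<Rightarrow> 'a set. (\<forall>n. F n \<subseteq> X \<and> F (Suc n) \<subseteq> F n) \<longrightarrow> (\<exists>m. \<forall>n\<ge>m. F n = F m))"

definition subset_acc :: "'a set \<Rightarrow> bool" where
  "subset_acc X \<longleftrightarrow>
     (\<forall>F :: nat \<Rightarrow> 'a set. (\<forall>n. F n \<subseteq> X \<and> F n \<subseteq> F (Suc n)) \<longrightarrow> (\<exists>m. \<forall>n\<ge>m. F n = F m))"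

lemma subset_dccD:
  assumes "subset_dcc X" "\<And>n. F n \<subseteq> X" "\<And>n. F (Suc n) \<subseteq> F n"
  shows "\<exists>m. \<forall>n\<ge>m. F n = F m"
  using assms(1) unfolding subset_dcc_def by (elim allE[where x=F] impE) (use assms(2,3) in blast)+

lemma subset_accD:
  assumes "subset_acc X" "\<And>n. F n \<subseteq> X" "\<And>n. F n \<subseteq> F (Suc n)"
  shows "\<exists>m. \<forall>n\<ge>m. F n = F m"
  using assms(1) unfolding subset_acc_def by (elim allE[where x=F] impE) (use assms(2,3) in blast)+

lemma subset_dcc_if_finite:
  assumes "finite X" shows "subset_dcc X"
  unfolding subset_dcc_def
proof (intro allI impI)
  fix F :: "nat \<Rightarrow> 'a set"
  assume F: "\<forall>n. F n \<subseteq> X \<and> F (Suc n) \<subseteq> F n"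
  then have dec: "\<And>n. F (Suc n) \<subseteq> F n" by blast
  obtain m where m: "\<And>n. card (F m) \<le> card (F n)"
    using ex_has_least_nat[of "\<lambda>_. True" 0 "\<lambda>n. card (F n)"] by blast
  have "finite (F m)" using F assms finite_subset by blast
  then have "F n = F m" if "n \<ge> m" for n
    using card_seteq lift_Suc_antimono_le[of F, OF dec that] m by blast
  then show "\<exists>m. \<forall>n\<ge>m. F n = F m" by blast
qed

lemma finite_if_subset_dcc:
  assumes "subset_dcc X" shows "finite X"
proof (rule ccontr)
  assume "infinite X"
  then obtain f :: "nat \<Rightarrow> 'a" where f: "inj f" "range f \<subseteq> X"
    using infinite_countable_subset by blast
  define F where "F n = X - f ` {..<n}" for n
  have "F (Suc n) \<subseteq> F n" for n
    unfolding F_def by (auto simp: lessThan_Suc)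
  then obtain m where "\<forall>n\<ge>m. F n = F m"
    using subset_dccD[OF assms, of F] unfolding F_def by blast
  then have "F (Suc m) = F m" using le_Suc_eq by blast
  moreover have "f m \<in> F m" "f m \<notin> F (Suc m)"
    using f unfolding F_def by (auto simp: inj_image_mem_iff)
  ultimately show False by simp
qed

lemma subset_dcc_iff_finite: "subset_dcc X \<longleftrightarrow> finite X"
  using subset_dcc_if_finite finite_if_subset_dcc by blast

text \<open>Ascending chains in X are handled through the descending chains of their complements.\<close>

lemma subset_acc_if_finite:
  assumes "finite X" shows "subset_acc X"
  unfolding subset_acc_def
proof (intro allI impI)
  fix F :: "nat \<Rightarrow> 'a set"
  assume F: "\<forall>n. F n \<subseteq> X \<and> F n \<subseteq> F (Suc n)"
  have "X - F (Suc n) \<subseteq> X - F n" for n using F by blast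
  then obtain m where m: "\<forall>n\<ge>m. X - F n = X - F m"
    using subset_dccD[OF subset_dcc_if_finite[OF assms], of "\<lambda>n. X - F n"] by blast
  have "F n = F m" if "n \<ge> m" for n
  proof -
    have "X - F n = X - F m" "F n \<subseteq> X" "F m \<subseteq> X" using m that F by blast+
    then show ?thesis by blast
  qed
  then show "\<exists>m. \<forall>n\<ge>m. F n = F m" by blast
qed

lemma finite_if_subset_acc:
  assumes "subset_acc X" shows "finite X"
proof (rule ccontr)
  assume "infinite X"
  then obtain f :: "nat \<Rightarrow> 'a" where f: "inj f" "range f \<subseteq> X"
    using infinite_countable_subset by blast
  define F where "F n = f ` {..<n}" for n
  have "F n \<subseteq> X" "F n \<subseteq> F (Suc n)" for n
    using f unfolding F_def by (auto simp: lessThan_Suc)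
  then obtain m where "\<forall>n\<ge>m. F n = F m"
    using subset_accD[OF assms, of F] by blast
  then have "F (Suc m) = F m" using le_Suc_eq by blast
  moreover have "f m \<notin> F m" "f m \<in> F (Suc m)"
    using f unfolding F_def by (auto simp: inj_image_mem_iff)
  ultimately show False by simp
qed

lemma subset_acc_iff_finite: "subset_acc X \<longleftrightarrow> finite X"
  using subset_acc_if_finite finite_if_subset_acc by blast

lemma Inter_rees_cong_eq_Id_on_iff:
  "(A \<times> A) \<inter> (\<Inter>C\<in>\<C>. rees_cong A C) = Id_on A \<longleftrightarrow>
     (\<forall>x\<in>A. \<forall>y\<in>A. (\<forall>C\<in>\<C>. x \<in> C \<and> y \<in> C) \<longrightarrow> x = y)"
  unfolding rees_cong_def by blast

lemma fin_rees_cogenE: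
  assumes "fin_rees_cogen A act" "\<And>B. B \<in> \<B> \<Longrightarrow> subact B A act"
    "(A \<times> A) \<inter> (\<Inter>B\<in>\<B>. rees_cong A B) = Id_on A"
  obtains \<J> where "finite \<J>" "\<J> \<subseteq> \<B>" "(A \<times> A) \<inter> (\<Inter>B\<in>\<J>. rees_cong A B) = Id_on A"
proof -
  have "\<exists>\<J>. finite \<J> \<and> \<J> \<subseteq> \<B> \<and> (A \<times> A) \<inter> (\<Inter>B\<in>\<J>. rees_cong A B) = Id_on A"
    by (rule assms(1)[unfolded fin_rees_cogen_def, THEN spec[where x=\<B>], THEN mp, THEN mp])
      (use assms(2,3) in auto)
  then show thesis using that by (elim exE conjE)
qed

locale semisimple_decomposition =
  fixes A :: "'a set" and act :: "'a \<Rightarrow> 's::monoid_mult \<Rightarrow> 'a" and \<theta> :: 'a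
    and \<B> :: "'a set set"
  assumes act0: "act0 A act \<theta>"
    and summands: "\<forall>B\<in>\<B>. subact B A act \<and> \<theta> \<in> B \<and> theta_simple B act \<theta>"
    and Union_summands: "\<Union>\<B> = A"
    and summands_disjoint: "\<forall>B\<in>\<B>. \<forall>C\<in>\<B>. B \<noteq> C \<longrightarrow> B \<inter> C = {\<theta>}"
begin

lemma act_closed: "a \<in> A \<Longrightarrow> act a s \<in> A"
  and act_one: "a \<in> A \<Longrightarrow> act a 1 = a"
  and act_mult: "a \<in> A \<Longrightarrow> act (act a s) t = act a (s * t)"
  and theta_in_A: "\<theta> \<in> A"
  and act_theta: "act \<theta> s = \<theta>"
  using act0 unfolding act0_def right_act_def by blast+

lemma summand_subact: "B \<in> \<B> \<Longrightarrow> subact B A act"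
  and theta_in_summand: "B \<in> \<B> \<Longrightarrow> \<theta> \<in> B"
  and summand_theta_simple: "B \<in> \<B> \<Longrightarrow> theta_simple B act \<theta>"
  using summands by blast+

lemma summand_unique:
  "\<lbrakk>B \<in> \<B>; C \<in> \<B>; x \<in> B; x \<in> C; x \<noteq> \<theta>\<rbrakk> \<Longrightarrow> B = C"
  using summands_disjoint by blast

lemma summand_cyclic:
  assumes B: "B \<in> \<B>" and b: "b \<in> B" "b \<noteq> \<theta>"
  shows "range (act b) = B"
proof -
  have "b \<in> A" using summand_subact[OF B] b unfolding subact_def by blast
  then have "subact (range (act b)) B act"
    using summand_subact[OF B] b act_mult unfolding subact_def by auto
  then have "range (act b) = B \<or> range (act b) = {\<theta>}"
    using summand_theta_simple[OF B] unfolding theta_simple_def by blast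
  moreover have "b \<in> range (act b)" using act_one[OF \<open>b \<in> A\<close>] by (metis rangeI)
  ultimately show ?thesis using b by blast
qed

definition nonzero_summands :: "'a set set" where
  "nonzero_summands = {B\<in>\<B>. B \<noteq> {\<theta>}}"

definition summands_below :: "'a set \<Rightarrow> 'a set set" where
  "summands_below C = {B\<in>nonzero_summands. B \<subseteq> C}"

definition summand_sum :: "'a set set \<Rightarrow> 'a set" where
  "summand_sum U = insert \<theta> (\<Union>U)"

lemma nonzero_summand_has_nonzero:
  "B \<in> nonzero_summands \<Longrightarrow> \<exists>b\<in>B. b \<noteq> \<theta>"
  using theta_in_summand unfolding nonzero_summands_def by blast

lemma summand_of_nonzero:
  assumes "a \<in> A" "a \<noteq> \<theta>"
  obtains B where "B \<in> nonzero_summands" "a \<in> B"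
  using assms Union_summands unfolding nonzero_summands_def by blast

lemma subact_contains_summand:
  assumes C: "subact C A act" and c: "c \<in> C" "c \<noteq> \<theta>"
  obtains B where "B \<in> nonzero_summands" "c \<in> B" "B \<subseteq> C"
proof -
  have "c \<in> A" using C c unfolding subact_def by blast
  then obtain B where B: "B \<in> nonzero_summands" "c \<in> B"
    using c summand_of_nonzero by blast
  have "B = range (act c)"
    using summand_cyclic B c unfolding nonzero_summands_def by blast
  also have "\<dots> \<subseteq> C" using C c unfolding subact_def by blast
  finally show thesis using that B by blast
qed

lemma theta_in_subact:
  assumes C: "subact C A act" shows "\<theta> \<in> C"
proof -
  obtain c where c: "c \<in> C" using C unfolding subact_def by blast
  show ?thesis
  proof (cases "c = \<theta>")
    case False
    with C c obtain B where "B \<in> nonzero_summands" "B \<subseteq> C"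
      by (rule subact_contains_summand)
    then show ?thesis using theta_in_summand unfolding nonzero_summands_def by blast
  qed (use c in simp)
qed

lemma subact_eq_summand_sum: "subact C A act \<Longrightarrow> C = summand_sum (summands_below C)"
  using subact_contains_summand theta_in_subact
  unfolding summand_sum_def summands_below_def by blast

lemma subact_summand_sum:
  assumes U: "U \<subseteq> nonzero_summands" shows "subact (summand_sum U) A act"
  unfolding subact_def
proof (intro conjI ballI allI)
  show "summand_sum U \<noteq> {}" "summand_sum U \<subseteq> A"
    using U theta_in_A Union_summands unfolding summand_sum_def nonzero_summands_def by blast+
  fix b s assume b: "b \<in> summand_sum U"
  show "act b s \<in> summand_sum U"
  proof (cases "b = \<theta>")
    case False
    then obtain B where "B \<in> U" "b \<in> B" using b unfolding summand_sum_def by blast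
    moreover have "subact B A act" using \<open>B \<in> U\<close> U summand_subact
      unfolding nonzero_summands_def by blast
    ultimately show ?thesis unfolding subact_def summand_sum_def by blast
  qed (simp add: act_theta summand_sum_def)
qed

lemma summands_below_summand_sum:
  assumes U: "U \<subseteq> nonzero_summands" shows "summands_below (summand_sum U) = U"
proof -
  have "B \<in> U" if B: "B \<in> nonzero_summands" "B \<subseteq> insert \<theta> (\<Union>U)" for B
  proof -
    obtain b where b: "b \<in> B" "b \<noteq> \<theta>" using nonzero_summand_has_nonzero[OF B(1)] by blast
    then obtain B' where "B' \<in> U" "b \<in> B'" using B(2) by blast
    then have "B = B'"
      using summand_unique B(1) U b unfolding nonzero_summands_def by blast
    then show ?thesis using \<open>B' \<in> U\<close> by simp
  qed
  then show ?thesis using U unfolding summands_below_def summand_sum_def by blast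
qed

lemma summands_below_subset: "summands_below C \<subseteq> nonzero_summands"
  unfolding summands_below_def by blast

lemma summands_below_mono: "C \<subseteq> D \<Longrightarrow> summands_below C \<subseteq> summands_below D"
  unfolding summands_below_def by blast

lemma summand_sum_mono: "U \<subseteq> V \<Longrightarrow> summand_sum U \<subseteq> summand_sum V"
  unfolding summand_sum_def by blast

lemma rees_artinian_iff_subset_dcc: "rees_artinian A act \<longleftrightarrow> subset_dcc nonzero_summands"
proof
  assume art: "rees_artinian A act"
  show "subset_dcc nonzero_summands"
    unfolding subset_dcc_def
  proof (intro allI impI)
    fix F assume "\<forall>n. F n \<subseteq> nonzero_summands \<and> F (Suc n) \<subseteq> F n"
    then have F_sub: "\<And>n. F n \<subseteq> nonzero_summands" and F_dec: "\<And>n. F (Suc n) \<subseteq> F n"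
      by simp_all
    define C where "C n = summand_sum (F n)" for n
    have "\<forall>n. subact (C n) A act \<and> C (Suc n) \<subseteq> C n"
      unfolding C_def using subact_summand_sum[OF F_sub] summand_sum_mono[OF F_dec] by simp
    then have "\<exists>m. \<forall>n\<ge>m. summands_below (C n) = summands_below (C m)"
      using art unfolding rees_artinian_def by (metis (no_types))
    moreover have "F n = summands_below (C n)" for n
      unfolding C_def by (simp add: summands_below_summand_sum[OF F_sub])
    ultimately show "\<exists>m. \<forall>n\<ge>m. F n = F m" by simp
  qed
next
  assume dcc: "subset_dcc nonzero_summands"
  show "rees_artinian A act"
    unfolding rees_artinian_def
  proof (intro allI impI)
    fix C assume "\<forall>n. subact (C n) A act \<and> C (Suc n) \<subseteq> C n"
    then have C_sub: "\<And>n. subact (C n) A act" and C_dec: "\<And>n. C (Suc n) \<subseteq> C n"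
      by simp_all
    have "\<exists>m. \<forall>n\<ge>m. summands_below (C n) = summands_below (C m)"
      by (rule subset_dccD[OF dcc]) (use summands_below_subset summands_below_mono[OF C_dec] in auto)
    then have "\<exists>m. \<forall>n\<ge>m. summand_sum (summands_below (C n)) = summand_sum (summands_below (C m))"
      by (metis (no_types))
    then show "\<exists>m. \<forall>n\<ge>m. C n = C m"
      using subact_eq_summand_sum[OF C_sub] by simp
  qed
qed

lemma rees_noetherian_iff_subset_acc: "rees_noetherian A act \<longleftrightarrow> subset_acc nonzero_summands"
proof
  assume noeth: "rees_noetherian A act"
  show "subset_acc nonzero_summands"
    unfolding subset_acc_def
  proof (intro allI impI)
    fix F assume "\<forall>n. F n \<subseteq> nonzero_summands \<and> F n \<subseteq> F (Suc n)"
    then have F_sub: "\<And>n. F n \<subseteq> nonzero_summands" and F_inc: "\<And>n. F n \<subseteq> F (Suc n)"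
      by simp_all
    define C where "C n = summand_sum (F n)" for n
    have "\<forall>n. subact (C n) A act \<and> C n \<subseteq> C (Suc n)"
      unfolding C_def using subact_summand_sum[OF F_sub] summand_sum_mono[OF F_inc] by simp
    then have "\<exists>m. \<forall>n\<ge>m. summands_below (C n) = summands_below (C m)"
      using noeth unfolding rees_noetherian_def by (metis (no_types))
    moreover have "F n = summands_below (C n)" for n
      unfolding C_def by (simp add: summands_below_summand_sum[OF F_sub])
    ultimately show "\<exists>m. \<forall>n\<ge>m. F n = F m" by simp
  qed
next
  assume acc: "subset_acc nonzero_summands"
  show "rees_noetherian A act"
    unfolding rees_noetherian_def
  proof (intro allI impI)
    fix C assume "\<forall>n. subact (C n) A act \<and> C n \<subseteq> C (Suc n)"
    then have C_sub: "\<And>n. subact (C n) A act" and C_inc: "\<And>n. C n \<subseteq> C (Suc n)"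
      by simp_all
    have "\<exists>m. \<forall>n\<ge>m. summands_below (C n) = summands_below (C m)"
      by (rule subset_accD[OF acc]) (use summands_below_subset summands_below_mono[OF C_inc] in auto)
    then have "\<exists>m. \<forall>n\<ge>m. summand_sum (summands_below (C n)) = summand_sum (summands_below (C m))"
      by (metis (no_types))
    then show "\<exists>m. \<forall>n\<ge>m. C n = C m"
      using subact_eq_summand_sum[OF C_sub] by simp
  qed
qed

lemma finite_summands_containing:
  assumes "x \<noteq> \<theta>" shows "finite {B\<in>\<B>. x \<in> B}"
proof (cases "\<exists>B\<in>\<B>. x \<in> B")
  case True
  then obtain B0 where "B0 \<in> \<B>" "x \<in> B0" by blast
  then have "{B\<in>\<B>. x \<in> B} \<subseteq> {B0}" using summand_unique assms by blast
  then show ?thesis using finite_subset by blast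
next
  case False
  then have "{B\<in>\<B>. x \<in> B} = {}" by blast
  then show ?thesis by (metis finite.emptyI)
qed

lemma fin_generated_iff_finite: "fin_generated A act \<longleftrightarrow> finite nonzero_summands"
proof
  assume "fin_generated A act"
  then obtain X where X: "finite X" "X \<subseteq> A" "A = {act x s | x s. x \<in> X}"
    unfolding fin_generated_def by blast
  have "nonzero_summands \<subseteq> (\<Union>x\<in>X - {\<theta>}. {B\<in>\<B>. x \<in> B})"
  proof
    fix B assume B: "B \<in> nonzero_summands"
    then obtain b where b: "b \<in> B" "b \<noteq> \<theta>" using nonzero_summand_has_nonzero by blast
    have "b \<in> A" using B b summand_subact unfolding nonzero_summands_def subact_def by blast
    then obtain x s where xs: "x \<in> X" "b = act x s" using X(3) by blast
    then have "x \<noteq> \<theta>" using b act_theta by auto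
    then obtain B' where B': "B' \<in> nonzero_summands" "x \<in> B'"
      using summand_of_nonzero xs X(2) by blast
    then have "b \<in> B'" using xs summand_subact unfolding nonzero_summands_def subact_def by blast
    then have "B = B'" using summand_unique B B' b unfolding nonzero_summands_def by blast
    then show "B \<in> (\<Union>x\<in>X - {\<theta>}. {B\<in>\<B>. x \<in> B})"
      using B B' xs \<open>x \<noteq> \<theta>\<close> unfolding nonzero_summands_def by blast
  qed
  moreover have "finite (\<Union>x\<in>X - {\<theta>}. {B\<in>\<B>. x \<in> B})"
    using X(1) finite_summands_containing by auto
  ultimately show "finite nonzero_summands" by (rule finite_subset)
next
  assume fin: "finite nonzero_summands"
  obtain g where g: "\<forall>B\<in>nonzero_summands. g B \<in> B \<and> g B \<noteq> \<theta>"
    using nonzero_summand_has_nonzero by metis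
  define X where "X = insert \<theta> (g ` nonzero_summands)"
  have X_sub: "X \<subseteq> A"
    using theta_in_A g Union_summands unfolding X_def nonzero_summands_def by blast
  have "a \<in> {act x s | x s. x \<in> X}" if a: "a \<in> A" for a
  proof (cases "a = \<theta>")
    case True
    then have "a = act \<theta> 1" by (simp add: act_theta)
    then show ?thesis unfolding X_def by blast
  next
    case False
    with a obtain B where B: "B \<in> nonzero_summands" "a \<in> B" by (rule summand_of_nonzero)
    then have "range (act (g B)) = B"
      using summand_cyclic g unfolding nonzero_summands_def by blast
    then obtain s where "a = act (g B) s" using B(2) by blast
    then show ?thesis using B(1) unfolding X_def by blast
  qed
  then have "A = {act x s | x s. x \<in> X}" using X_sub act_closed by blast
  moreover have "finite X" unfolding X_def using fin by simp
  ultimately show "fin_generated A act" unfolding fin_generated_def using X_sub by blast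
qed

lemma finite_subacts:
  assumes "finite nonzero_summands" shows "finite {C. subact C A act}"
proof -
  have "{C. subact C A act} \<subseteq> summand_sum ` Pow nonzero_summands"
  proof
    fix C assume "C \<in> {C. subact C A act}"
    then have "C = summand_sum (summands_below C)" by (simp add: subact_eq_summand_sum)
    then show "C \<in> summand_sum ` Pow nonzero_summands"
      by (rule image_eqI) (simp add: summands_below_subset)
  qed
  then show ?thesis by (rule finite_surj[rotated]) (simp add: assms)
qed

lemma Inter_summand_sums_omitting_one:
  assumes x: "x \<in> A" "\<forall>B\<in>nonzero_summands. x \<in> summand_sum (nonzero_summands - {B})"
  shows "x = \<theta>"
proof (rule ccontr)
  assume "x \<noteq> \<theta>"
  with x(1) obtain B where B: "B \<in> nonzero_summands" "x \<in> B" by (rule summand_of_nonzero)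
  then obtain B' where "B' \<in> nonzero_summands - {B}" "x \<in> B'"
    using x(2) \<open>x \<noteq> \<theta>\<close> unfolding summand_sum_def by blast
  then show False using summand_unique B \<open>x \<noteq> \<theta>\<close> unfolding nonzero_summands_def by blast
qed

lemma fin_rees_cogen_iff_finite: "fin_rees_cogen A act \<longleftrightarrow> finite nonzero_summands"
proof
  assume cogen: "fin_rees_cogen A act"
  show "finite nonzero_summands"
  proof (rule ccontr)
    assume inf: "infinite nonzero_summands"
    define E where "E B = summand_sum (nonzero_summands - {B})" for B
    have sub: "subact C A act" if "C \<in> E ` nonzero_summands" for C
      using that subact_summand_sum unfolding E_def by blast
    have Id: "(A \<times> A) \<inter> (\<Inter>C\<in>E ` nonzero_summands. rees_cong A C) = Id_on A"
      unfolding Inter_rees_cong_eq_Id_on_iff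
    proof (intro ballI impI)
      fix x y assume "x \<in> A" "y \<in> A" "\<forall>C\<in>E ` nonzero_summands. x \<in> C \<and> y \<in> C"
      then have "x = \<theta>" "y = \<theta>"
        using Inter_summand_sums_omitting_one unfolding E_def by auto
      then show "x = y" by simp
    qed
    obtain J where J: "finite J" "J \<subseteq> E ` nonzero_summands"
        "(A \<times> A) \<inter> (\<Inter>C\<in>J. rees_cong A C) = Id_on A"
      using cogen sub Id by (rule fin_rees_cogenE)
    then obtain P0 where P0: "P0 \<subseteq> nonzero_summands" "finite P0" "J = E ` P0"
      by (meson finite_subset_image)
    have "\<not> nonzero_summands \<subseteq> P0" using inf P0(2) finite_subset by auto
    then obtain B1 where B1: "B1 \<in> nonzero_summands" "B1 \<notin> P0" by blast
    then obtain b where b: "b \<in> B1" "b \<noteq> \<theta>" using nonzero_summand_has_nonzero by blast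
    have "b \<in> A"
      using B1 b summand_subact unfolding nonzero_summands_def subact_def by blast
    moreover have "\<forall>C\<in>J. \<theta> \<in> C \<and> b \<in> C"
      using P0(3) B1 b unfolding E_def summand_sum_def by blast
    ultimately have "\<theta> = b"
      using J(3) theta_in_A unfolding Inter_rees_cong_eq_Id_on_iff by blast
    then show False using b(2) by simp
  qed
next
  assume fin: "finite nonzero_summands"
  show "fin_rees_cogen A act"
    unfolding fin_rees_cogen_def
  proof (intro allI impI)
    fix \<C> assume sub: "\<forall>C\<in>\<C>. subact C A act"
      and Id: "(A \<times> A) \<inter> (\<Inter>C\<in>\<C>. rees_cong A C) = Id_on A"
    have "\<C> \<subseteq> {C. subact C A act}" using sub by blast
    then have "finite \<C>" using finite_subacts[OF fin] by (rule finite_subset)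
    with Id show "\<exists>\<J>. finite \<J> \<and> \<J> \<subseteq> \<C> \<and> (A \<times> A) \<inter> (\<Inter>C\<in>\<J>. rees_cong A C) = Id_on A"
      by blast
  qed
qed

end

theorem mainTheorem8:
  fixes A :: "'a set" and act :: "'a \<Rightarrow> 's::{monoid_mult,mult_zero} \<Rightarrow> 'a" and \<theta> :: 'a
  assumes "semisimple A act \<theta>"
  shows "(rees_artinian A act \<longleftrightarrow> fin_rees_cogen A act) \<and>
         (fin_rees_cogen A act \<longleftrightarrow> fin_generated A act) \<and>
         (fin_generated A act \<longleftrightarrow> rees_noetherian A act)"
proof -
  obtain \<B> where "semisimple_decomposition A act \<theta> \<B>"
    using assms unfolding semisimple_def semisimple_decomposition_def by blast
  then interpret semisimple_decomposition A act \<theta> \<B> .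
  show ?thesis
    unfolding rees_artinian_iff_subset_dcc rees_noetherian_iff_subset_acc
      fin_generated_iff_finite fin_rees_cogen_iff_finite
      subset_dcc_iff_finite subset_acc_iff_finite
    by simp
qed

end
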